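(* Let $B\in\mathbb{C}^{n\times n}$ be nonzero of rank $r$ with Hartwig–Spindelböck decomposition $B=U\begin{bmatrix}\Sigma K&\Sigma L\\0&0\end{bmatrix}U^*$, let $T\in\mathbb{C}^{r\times r}$ be idempotent, and let $A=U\begin{bmatrix}(\Sigma^{-1}T)^\dagger K&(\Sigma^{-1}T)^\dagger L\\0&0\end{bmatrix}U^*$, so that $A\le^{\diamond}B$. Then $A^\dagger\le^{\diamond}B^\dagger$ if and only if $T(T^*-I_r)\Sigma^{-2}T=0$.
   Context: $M^*$ is the conjugate transpose, $M^\dagger$ the Moore–Penrose inverse, $\mathcal{R}(M)$ the column space. Hartwig–Spindelböck decomposition: every $B\in\mathbb{C}^{n\times n}$ of rank $r>0$ can be written $B=U\begin{bmatrix}\Sigma K&\Sigma L\\0&0\end{bmatrix}U^*$ with $U$ unitary, $\Sigma\in\mathbb{C}^{r\times r}$ the positive diagonal matrix of nonzero singular values of $B$, $K\in\mathbb{C}^{r\times r}$, $L\in\mathbb{C}^{r\times(n-r)}$ with $KK^*+LL^*=I_r$. Diamond order: $X\le^{\diamond}Y$ iff $\mathcal{R}(X)\subseteq\mathcal{R}(Y)$, $\mathcal{R}(X^* )\subseteq\mathcal{R}(Y^* )$, and $XY^*X=XX^*X$. *)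

theory Defs
  imports "Jordan_Normal_Form.DL_Rank" "Jordan_Normal_Form.Schur_Decomposition"
begin

definition unitary_mat :: "complex mat \<Rightarrow> nat \<Rightarrow> bool" where
  "unitary_mat U n \<longleftrightarrow> U \<in> carrier_mat n n \<and> U * mat_adjoint U = 1\<^sub>m n \<and> mat_adjoint U * U = 1\<^sub>m n"

definition penrose :: "complex mat \<Rightarrow> complex mat \<Rightarrow> bool" where
  "penrose M X \<longleftrightarrow> X \<in> carrier_mat (dim_col M) (dim_row M) \<and>
     M * X * M = M \<and> X * M * X = X \<and>
     mat_adjoint (M * X) = M * X \<and> mat_adjoint (X * M) = X * M"

definition mp_inverse :: "complex mat \<Rightarrow> complex mat" where
  "mp_inverse M = (THE X. penrose M X)"

definition col_range :: "complex mat \<Rightarrow> complex vec set" where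
  "col_range M = {M *\<^sub>v x | x. x \<in> carrier_vec (dim_col M)}"

definition diamond_le :: "complex mat \<Rightarrow> complex mat \<Rightarrow> bool" where
  "diamond_le X Y \<longleftrightarrow> col_range X \<subseteq> col_range Y \<and>
     col_range (mat_adjoint X) \<subseteq> col_range (mat_adjoint Y) \<and>
     X * mat_adjoint Y * X = X * mat_adjoint X * X"

end

(* Write B = P \<Sigma> C, where P = U [I; 0] is an isometry and C = [K L] U^* is a co-isometry
   (K K^* + L L^* = I); likewise A = P G C with G = (\<Sigma>^-1 T)^\<dagger>.  For such factorisations
   (P G C)^\<dagger> = C^* G^\<dagger> P^*, so A^\<dagger> = C^* \<Sigma>^-1 T P^* and B^\<dagger> = C^* \<Sigma>^-1 P^*.  Then
   A^\<dagger> = B^\<dagger> P \<Sigma> T P^* and a similar identity for the adjoints give both range inclusions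
   for free, and the remaining condition A^\<dagger> (B^\<dagger>)^* A^\<dagger> = A^\<dagger> (A^\<dagger>)^* A^\<dagger> becomes,
   after cancelling C^*, P^* and \<Sigma>^-1, the identity T \<Sigma>^-2 T = T T^* \<Sigma>^-2 T. *)

theory Submission
  imports Defs
begin

lemma mat_adjoint_alt:
  "mat_adjoint (A :: complex mat) = mat (dim_col A) (dim_row A) (\<lambda>(i,j). cnj (A $$ (j,i)))"
  unfolding mat_adjoint_def by (rule eq_matI) (auto simp: mat_of_rows_index)

lemma dim_mat_adjoint [simp]:
  "dim_row (mat_adjoint (A :: complex mat)) = dim_col A"
  "dim_col (mat_adjoint (A :: complex mat)) = dim_row A"
  by (auto simp: mat_adjoint_alt)

lemma index_mat_adjoint [simp]:
  "i < dim_col A \<Longrightarrow> j < dim_row A \<Longrightarrow> mat_adjoint (A :: complex mat) $$ (i,j) = cnj (A $$ (j,i))"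
  by (auto simp: mat_adjoint_alt)

lemma mat_adjoint_carrier [simp]:
  "(A :: complex mat) \<in> carrier_mat m n \<Longrightarrow> mat_adjoint A \<in> carrier_mat n m"
  unfolding carrier_mat_def by simp

lemma mat_adjoint_adjoint [simp]: "mat_adjoint (mat_adjoint (A :: complex mat)) = A"
  by (rule eq_matI) auto

lemma mat_adjoint_one [simp]: "mat_adjoint (1\<^sub>m k :: complex mat) = 1\<^sub>m k"
  by (rule eq_matI) auto

lemma mat_adjoint_mult:
  assumes "dim_col (A :: complex mat) = dim_row B"
  shows "mat_adjoint (A * B) = mat_adjoint B * mat_adjoint A"
proof (rule eq_matI)
  fix i j assume i: "i < dim_row (mat_adjoint B * mat_adjoint A)"
    and j: "j < dim_col (mat_adjoint B * mat_adjoint A)"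
  have "mat_adjoint (A * B) $$ (i, j) = cnj (\<Sum>k<dim_row B. A $$ (j,k) * B $$ (k,i))"
    using i j assms by (simp add: scalar_prod_def atLeast0LessThan)
  also have "\<dots> = (\<Sum>k<dim_row B. cnj (B $$ (k,i)) * cnj (A $$ (j,k)))"
    by (simp add: cnj_sum mult.commute)
  also have "\<dots> = (mat_adjoint B * mat_adjoint A) $$ (i,j)"
    using i j assms by (simp add: scalar_prod_def atLeast0LessThan)
  finally show "mat_adjoint (A * B) $$ (i, j) = (mat_adjoint B * mat_adjoint A) $$ (i,j)" .
qed auto

lemma mat_adjoint_four_block_mat:
  assumes "(A :: complex mat) \<in> carrier_mat r1 c1" "B \<in> carrier_mat r1 c2"
    "C \<in> carrier_mat r2 c1" "D \<in> carrier_mat r2 c2"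
  shows "mat_adjoint (four_block_mat A B C D) =
    four_block_mat (mat_adjoint A) (mat_adjoint C) (mat_adjoint B) (mat_adjoint D)"
  using assms by (intro eq_matI) (auto simp: index_mat_four_block)

lemma mat_adjoint_diag_real:
  "mat_adjoint (mat k k (\<lambda>(i,j). if i = j then complex_of_real (f i) else 0)) =
    mat k k (\<lambda>(i,j). if i = j then complex_of_real (f i) else 0)"
  by (rule eq_matI) auto

lemma assoc_mult_mat_dims:
  fixes A :: "'a :: semiring_0 mat"
  assumes "dim_col A = dim_row B" "dim_col B = dim_row C"
  shows "A * B * C = A * (B * C)"
  using assms by (intro assoc_mult_mat[of _ "dim_row A" "dim_col A" _ "dim_col B" _ "dim_col C"]) auto

lemma mat_adjoint_mult_self_eq_zero:
  assumes "mat_adjoint A * A = 0\<^sub>m (dim_col A) (dim_col A)"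
  shows "A = 0\<^sub>m (dim_row A) (dim_col (A :: complex mat))"
proof (rule eq_matI)
  fix i j assume i: "i < dim_row (0\<^sub>m (dim_row A) (dim_col A) :: complex mat)"
    and j: "j < dim_col (0\<^sub>m (dim_row A) (dim_col A) :: complex mat)"
  have "complex_of_real (\<Sum>k<dim_row A. (cmod (A $$ (k,j)))\<^sup>2) =
      (\<Sum>k<dim_row A. cnj (A $$ (k,j)) * A $$ (k,j))"
    by (simp only: of_real_sum complex_norm_square) (simp add: mult.commute)
  also have "\<dots> = (mat_adjoint A * A) $$ (j,j)"
    using j by (simp add: scalar_prod_def atLeast0LessThan)
  also have "\<dots> = 0"
    using assms j by simp
  finally have "(\<Sum>k<dim_row A. (cmod (A $$ (k,j)))\<^sup>2) = 0"
    by (simp only: of_real_eq_0_iff)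
  then have "(cmod (A $$ (i,j)))\<^sup>2 = 0"
    using i by (simp add: sum_nonneg_eq_0_iff)
  then show "A $$ (i,j) = 0\<^sub>m (dim_row A) (dim_col A) $$ (i,j)"
    using i j by simp
qed auto

lemma diag_mat_mult:
  fixes a b :: "nat \<Rightarrow> 'a :: semiring_1"
  shows "mat k k (\<lambda>(i,j). if i = j then a i else 0) * mat k k (\<lambda>(i,j). if i = j then b i else 0) =
    mat k k (\<lambda>(i,j). if i = j then a i * b i else 0)"
    (is "?A * ?B = ?C")
proof (rule eq_matI)
  fix i j assume "i < dim_row ?C" "j < dim_col ?C"
  then have i: "i < k" and j: "j < k" by simp_all
  have "(?A * ?B) $$ (i,j) = (\<Sum>l\<in>{0..<k}. ?A $$ (i,l) * ?B $$ (l,j))"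
    using i j by (simp add: scalar_prod_def)
  also have "\<dots> = (\<Sum>l\<in>{0..<k}. if l = i then ?C $$ (i,j) else 0)"
    using i j by (intro sum.cong) auto
  also have "\<dots> = ?C $$ (i,j)" using i by simp
  finally show "(?A * ?B) $$ (i,j) = ?C $$ (i,j)" .
qed auto

lemma diag_mat_mult_eq_one:
  fixes a b :: "nat \<Rightarrow> 'a :: semiring_1"
  assumes "\<forall>i<k. a i * b i = 1"
  shows "mat k k (\<lambda>(i,j). if i = j then a i else 0) * mat k k (\<lambda>(i,j). if i = j then b i else 0) = 1\<^sub>m k"
  unfolding diag_mat_mult using assms by (intro eq_matI) auto

section \<open>Moore-Penrose inverse\<close>

lemma penrose_sym: "penrose A X \<Longrightarrow> penrose X A"
  unfolding penrose_def carrier_mat_def by (elim conjE) (intro conjI; simp)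

lemma penrose_unique:
  assumes "penrose A X" "penrose A Y"
  shows "X = Y"
proof -
  let ?m = "dim_row A" and ?n = "dim_col A"
  from assms have X: "X \<in> carrier_mat ?n ?m" and Y: "Y \<in> carrier_mat ?n ?m"
    and AXA: "A * X * A = A" and XAX: "X * A * X = X"
    and AX: "mat_adjoint (A * X) = A * X" and XA: "mat_adjoint (X * A) = X * A"
    and AYA: "A * Y * A = A" and YAY: "Y * A * Y = Y"
    and AY: "mat_adjoint (A * Y) = A * Y" and YA: "mat_adjoint (Y * A) = Y * A"
    unfolding penrose_def by blast+
  note [simp] = carrier_matD[OF X] carrier_matD[OF Y]
  have AYA': "mat_adjoint A * mat_adjoint Y * mat_adjoint A = mat_adjoint A"
    using arg_cong[OF AYA, of mat_adjoint] by (simp add: mat_adjoint_mult assoc_mult_mat_dims)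
  have AXA': "mat_adjoint A * mat_adjoint X * mat_adjoint A = mat_adjoint A"
    using arg_cong[OF AXA, of mat_adjoint] by (simp add: mat_adjoint_mult assoc_mult_mat_dims)
  have "X = X * (A * X)" using XAX by (simp add: assoc_mult_mat_dims)
  also have "\<dots> = X * (mat_adjoint X * mat_adjoint A)" using AX by (simp add: mat_adjoint_mult)
  also have "\<dots> = X * (mat_adjoint X * (mat_adjoint A * mat_adjoint Y * mat_adjoint A))"
    by (simp only: AYA')
  also have "\<dots> = X * ((mat_adjoint X * mat_adjoint A) * (mat_adjoint Y * mat_adjoint A))"
    by (simp add: assoc_mult_mat_dims)
  also have "\<dots> = (X * A * X) * A * Y" using AX AY by (simp add: mat_adjoint_mult assoc_mult_mat_dims)
  finally have X_eq: "X = X * A * Y" using XAX by simp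
  have "Y = (Y * A) * Y" using YAY by simp
  also have "\<dots> = (mat_adjoint A * mat_adjoint Y) * Y" using YA by (simp add: mat_adjoint_mult)
  also have "\<dots> = ((mat_adjoint A * mat_adjoint X * mat_adjoint A) * mat_adjoint Y) * Y"
    by (simp only: AXA')
  also have "\<dots> = (mat_adjoint A * mat_adjoint X) * (mat_adjoint A * mat_adjoint Y) * Y"
    by (simp add: assoc_mult_mat_dims)
  also have "\<dots> = X * A * (Y * A * Y)" using XA YA by (simp add: mat_adjoint_mult assoc_mult_mat_dims)
  finally show ?thesis using X_eq YAY by simp
qed

lemma mp_inverse_eqI: "penrose A X \<Longrightarrow> mp_inverse A = X"
  unfolding mp_inverse_def using penrose_unique by blast

lemma exists_g_inverse:
  assumes A: "(A :: 'a :: field mat) \<in> carrier_mat nr nc"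
  shows "\<exists>G \<in> carrier_mat nc nr. A * G * A = A"
proof -
  define C where "C = gauss_jordan_single A"
  note gj = gauss_jordan_single[OF A C_def[symmetric]]
  from gj(4) obtain P Q where CPA: "C = P * A" and P: "P \<in> carrier_mat nr nr"
    and Q: "Q \<in> carrier_mat nr nr" and PQ: "P * Q = 1\<^sub>m nr" and QP: "Q * P = 1\<^sub>m nr"
    by blast
  have Cc: "C \<in> carrier_mat nr nc" by (rule gj(2))
  from gj(3) obtain f where piv: "pivot_fun C f nc"
    unfolding row_echelon_form_def using Cc by auto
  note pD = pivot_funD[OF _ piv]
  (* G0 sends each pivot column back to its row, so C G0 is the identity on the nonzero rows of
     the echelon form C; then G0 P is a g-inverse of A = P^-1 C. *)
  define G0 where "G0 = mat nc nr (\<lambda>(j,i). if f i = j then 1 :: 'a else 0)"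
  have G0: "G0 \<in> carrier_mat nc nr" unfolding G0_def by auto
  have CG: "(C * G0) $$ (a,i) = (if f i < nc \<and> a = i then 1 else 0)"
    if a: "a < nr" and i: "i < nr" for a i
  proof -
    have "(C * G0) $$ (a,i) = (\<Sum>j\<in>{0..<nc}. C $$ (a,j) * (if f i = j then 1 else 0))"
      using a i Cc unfolding G0_def by (simp add: scalar_prod_def)
    also have "\<dots> = (\<Sum>j\<in>{0..<nc}. if f i = j then C $$ (a,j) else 0)"
      by (rule sum.cong) auto
    also have "\<dots> = (if f i < nc then C $$ (a, f i) else 0)" by (simp add: sum.delta)
    also have "\<dots> = (if f i < nc \<and> a = i then 1 else 0)"
      using pD(4)[OF _ i] pD(5)[OF _ i _ a] Cc by auto
    finally show ?thesis .
  qed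
  have CGC: "C * G0 * C = C"
  proof (rule eq_matI)
    fix a b assume "a < dim_row C" and "b < dim_col C"
    then have a: "a < nr" and b: "b < nc" using Cc by auto
    have "(C * G0 * C) $$ (a,b) = (\<Sum>i\<in>{0..<nr}. (C * G0) $$ (a,i) * C $$ (i,b))"
      using a b Cc G0 by (simp add: scalar_prod_def del: assoc_mult_mat)
    also have "\<dots> = (\<Sum>i\<in>{0..<nr}. if i = a then (if f a < nc then C $$ (a,b) else 0) else 0)"
      by (rule sum.cong) (auto simp: CG a)
    also have "\<dots> = C $$ (a,b)"
      using a pD(1)[OF _ a] pD(2)[OF _ a, of b] b Cc by auto
    finally show "(C * G0 * C) $$ (a,b) = C $$ (a,b)" .
  qed (use Cc G0 in auto)
  have "Q * C = (Q * P) * A"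
    unfolding CPA using Q P A by (simp add: assoc_mult_mat_dims)
  then have AQC: "A = Q * C" using QP A by simp
  have "A * (G0 * P) * A = Q * (C * G0 * (P * Q) * C)"
    using AQC Q P G0 Cc by (simp add: assoc_mult_mat_dims)
  also have "\<dots> = A" using PQ CGC AQC G0 Cc by simp
  finally show ?thesis using G0 P by (intro bexI[of _ "G0 * P"]) auto
qed

lemma eq_of_minus_eq_zero_mat:
  assumes "(X :: 'a :: ab_group_add mat) \<in> carrier_mat a b" "Y \<in> carrier_mat a b" "X - Y = 0\<^sub>m a b"
  shows "X = Y"
proof (rule eq_matI)
  fix i j assume ij: "i < dim_row Y" "j < dim_col Y"
  have "X $$ (i,j) - Y $$ (i,j) = (X - Y) $$ (i,j)" using ij by simp
  also have "\<dots> = 0" using assms ij by simp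
  finally show "X $$ (i,j) = Y $$ (i,j)" by simp
qed (use assms in auto)

lemma gram_g_inverse_cancel:
  assumes A: "(A :: complex mat) \<in> carrier_mat m n" and Z: "Z \<in> carrier_mat n n"
    and HZH: "mat_adjoint A * A * Z * (mat_adjoint A * A) = mat_adjoint A * A"
  shows "A * Z * mat_adjoint A * A = A"
proof -
  let ?H = "mat_adjoint A * A"
  note [simp] = carrier_matD[OF A] carrier_matD[OF Z]
  define W where "W = Z * ?H - 1\<^sub>m n"
  have H: "?H \<in> carrier_mat n n" by (intro carrier_matI) simp_all
  have W: "W \<in> carrier_mat n n" unfolding W_def by (intro carrier_matI) simp_all
  note [simp] = carrier_matD[OF W]
  (* H W = H Z H - H = 0, and (A W)^* (A W) = W^* H W, hence A W = 0. *)
  have "?H * W = ?H * (Z * ?H) - ?H * 1\<^sub>m n"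
    unfolding W_def by (rule mult_minus_distrib_mat[OF H _ one_carrier_mat]) (use Z H in simp_all)
  also have "?H * (Z * ?H) = ?H" using HZH H Z by (simp add: assoc_mult_mat_dims)
  finally have HW: "?H * W = 0\<^sub>m n n" using H by simp
  have "A * W = A * (Z * ?H) - A * 1\<^sub>m n"
    unfolding W_def by (rule mult_minus_distrib_mat[OF A _ one_carrier_mat]) (use Z H in simp_all)
  also have "A * (Z * ?H) = A * Z * mat_adjoint A * A" using A Z by (simp add: assoc_mult_mat_dims)
  finally have AW: "A * W = A * Z * mat_adjoint A * A - A" using A by simp
  have "mat_adjoint (A * W) * (A * W) = mat_adjoint W * (?H * W)"
    using A W by (simp add: mat_adjoint_mult assoc_mult_mat_dims)
  also have "\<dots> = 0\<^sub>m n n" using HW W by simp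
  finally have "A * W = 0\<^sub>m m n" using mat_adjoint_mult_self_eq_zero[of "A * W"] A W by simp
  with AW have "A * Z * mat_adjoint A * A - A = 0\<^sub>m m n" by simp
  moreover have "A * Z * mat_adjoint A * A \<in> carrier_mat m n" by (intro carrier_matI) simp_all
  ultimately show ?thesis using eq_of_minus_eq_zero_mat A by blast
qed

lemma hermitian_gram_g_inverse:
  assumes A: "(A :: complex mat) \<in> carrier_mat m n" and Z: "Z \<in> carrier_mat n n"
    and HZH: "mat_adjoint A * A * Z * (mat_adjoint A * A) = mat_adjoint A * A"
  shows "mat_adjoint (A * Z * mat_adjoint A) = A * Z * mat_adjoint A"
proof -
  note [simp] = carrier_matD[OF A] carrier_matD[OF Z]
  have "mat_adjoint A * A * mat_adjoint Z * (mat_adjoint A * A) = mat_adjoint A * A"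
    using arg_cong[OF HZH, of mat_adjoint] by (simp add: mat_adjoint_mult assoc_mult_mat_dims)
  then have AZ'A'A: "A * mat_adjoint Z * mat_adjoint A * A = A"
    using Z by (intro gram_g_inverse_cancel[OF A]) auto
  have A'AZA': "mat_adjoint A * A * Z * mat_adjoint A = mat_adjoint A"
    using arg_cong[OF AZ'A'A, of mat_adjoint] by (simp add: mat_adjoint_mult assoc_mult_mat_dims)
  have "A * Z * mat_adjoint A = (A * mat_adjoint Z * mat_adjoint A * A) * Z * mat_adjoint A"
    by (simp only: AZ'A'A)
  also have "\<dots> = A * mat_adjoint Z * (mat_adjoint A * A * Z * mat_adjoint A)"
    by (simp add: assoc_mult_mat_dims)
  also have "\<dots> = mat_adjoint (A * Z * mat_adjoint A)"
    using A'AZA' by (simp add: mat_adjoint_mult assoc_mult_mat_dims)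
  finally show ?thesis by (rule sym)
qed

(* With g-inverses Z1 of A A^* and Z2 of A^* A, the Moore-Penrose inverse is A^* Z1 A Z2 A^*. *)
lemma penrose_exists:
  assumes A: "(A :: complex mat) \<in> carrier_mat m n"
  shows "\<exists>X. penrose A X"
proof -
  let ?A' = "mat_adjoint A"
  have A': "?A' \<in> carrier_mat n m" using A by simp
  have "A * ?A' \<in> carrier_mat m m" "?A' * A \<in> carrier_mat n n"
    using A by (auto intro: carrier_matI)
  from exists_g_inverse[OF this(1)] exists_g_inverse[OF this(2)]
  obtain Z1 Z2 where Z1: "Z1 \<in> carrier_mat m m" and H1: "A * ?A' * Z1 * (A * ?A') = A * ?A'"
    and Z2: "Z2 \<in> carrier_mat n n" and H2: "?A' * A * Z2 * (?A' * A) = ?A' * A"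
    by blast
  note [simp] = carrier_matD[OF A] carrier_matD[OF Z1] carrier_matD[OF Z2]
  have H1': "mat_adjoint ?A' * ?A' * Z1 * (mat_adjoint ?A' * ?A') = mat_adjoint ?A' * ?A'"
    using H1 by simp
  have f1: "A * Z2 * ?A' * A = A" by (rule gram_g_inverse_cancel[OF A Z2 H2])
  have h1: "mat_adjoint (?A' * Z1 * A) = ?A' * Z1 * A"
    using hermitian_gram_g_inverse[OF A' Z1 H1'] by simp
  have g: "?A' * Z1 * A * ?A' = ?A'"
    using gram_g_inverse_cancel[OF A' Z1 H1'] by simp
  have "A * ?A' * mat_adjoint Z1 * A = A"
    using arg_cong[OF g, of mat_adjoint] by (simp add: mat_adjoint_mult assoc_mult_mat_dims)
  then have f2: "A * ?A' * Z1 * A = A"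
    using h1 by (simp add: mat_adjoint_mult assoc_mult_mat_dims)
  have h2: "mat_adjoint (A * Z2 * ?A') = A * Z2 * ?A'"
    by (rule hermitian_gram_g_inverse[OF A Z2 H2])
  define X where "X = ?A' * Z1 * A * Z2 * ?A'"
  have AX: "A * X = A * Z2 * ?A'"
  proof -
    have "A * X = (A * ?A' * Z1 * A) * (Z2 * ?A')" unfolding X_def by (simp add: assoc_mult_mat_dims)
    also have "\<dots> = A * (Z2 * ?A')" by (simp only: f2)
    finally show ?thesis by (simp add: assoc_mult_mat_dims)
  qed
  have XA: "X * A = ?A' * Z1 * A"
  proof -
    have "X * A = (?A' * Z1) * (A * Z2 * ?A' * A)" unfolding X_def by (simp add: assoc_mult_mat_dims)
    then show ?thesis using f1 by simp
  qed
  have "X * A * X = (?A' * Z1) * (A * ?A' * Z1 * A) * (Z2 * ?A')"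
    unfolding XA by (simp add: X_def assoc_mult_mat_dims)
  also have "\<dots> = X"
    unfolding f2 by (simp add: X_def assoc_mult_mat_dims)
  finally have XAX: "X * A * X = X" .
  have X: "X \<in> carrier_mat n m" unfolding X_def by (intro carrier_matI) auto
  have "penrose A X"
    unfolding penrose_def using X A AX XA XAX f1 h1 h2 by simp
  then show ?thesis by blast
qed

lemma penrose_mp_inverse:
  assumes "(A :: complex mat) \<in> carrier_mat m n"
  shows "penrose A (mp_inverse A)"
proof -
  obtain X where "penrose A X" using penrose_exists[OF assms] by blast
  then show ?thesis by (simp add: mp_inverse_eqI)
qed

section \<open>Block matrices\<close>

definition append_cols :: "'a :: zero mat \<Rightarrow> 'a mat \<Rightarrow> 'a mat" where
  "append_cols A B = four_block_mat A B (0\<^sub>m 0 (dim_col A)) (0\<^sub>m 0 (dim_col B))"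

lemma carrier_append_cols:
  "A \<in> carrier_mat nr nc1 \<Longrightarrow> B \<in> carrier_mat nr nc2 \<Longrightarrow> append_cols A B \<in> carrier_mat nr (nc1 + nc2)"
  unfolding append_cols_def by auto

lemma four_block_mat_empty:
  "A \<in> carrier_mat nr nc \<Longrightarrow> four_block_mat A (0\<^sub>m nr 0) (0\<^sub>m 0 nc) (0\<^sub>m 0 0) = (A :: 'a :: zero mat)"
  by auto

lemma append_rows_mult:
  fixes A :: "'a :: semiring_0 mat"
  assumes A: "A \<in> carrier_mat nr1 k" and B: "B \<in> carrier_mat nr2 k" and X: "X \<in> carrier_mat k nc"
  shows "(A @\<^sub>r B) * X = (A * X) @\<^sub>r (B * X)"
proof -
  have "(A @\<^sub>r B) * X = four_block_mat A (0\<^sub>m nr1 0) B (0\<^sub>m nr2 0) *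
      four_block_mat X (0\<^sub>m k 0) (0\<^sub>m 0 nc) (0\<^sub>m 0 0)"
    unfolding append_rows_def using A B X four_block_mat_empty[OF X] by simp
  also have "\<dots> = four_block_mat (A * X + 0\<^sub>m nr1 0 * 0\<^sub>m 0 nc) (A * 0\<^sub>m k 0 + 0\<^sub>m nr1 0 * 0\<^sub>m 0 0)
      (B * X + 0\<^sub>m nr2 0 * 0\<^sub>m 0 nc) (B * 0\<^sub>m k 0 + 0\<^sub>m nr2 0 * 0\<^sub>m 0 0)"
    using A B X by (intro mult_four_block_mat) auto
  also have "\<dots> = (A * X) @\<^sub>r (B * X)"
    unfolding append_rows_def using A B X by simp
  finally show ?thesis .
qed

lemma append_rows_mult_append_cols:
  fixes A :: "'a :: semiring_0 mat"
  assumes "A \<in> carrier_mat nr1 k" "B \<in> carrier_mat nr2 k" "K \<in> carrier_mat k nc1" "L \<in> carrier_mat k nc2"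
  shows "(A @\<^sub>r B) * append_cols K L = four_block_mat (A * K) (A * L) (B * K) (B * L)"
proof -
  have "(A @\<^sub>r B) * append_cols K L =
      four_block_mat A (0\<^sub>m nr1 0) B (0\<^sub>m nr2 0) * four_block_mat K L (0\<^sub>m 0 nc1) (0\<^sub>m 0 nc2)"
    unfolding append_rows_def append_cols_def using assms by auto
  also have "\<dots> = four_block_mat (A * K + 0\<^sub>m nr1 0 * 0\<^sub>m 0 nc1) (A * L + 0\<^sub>m nr1 0 * 0\<^sub>m 0 nc2)
      (B * K + 0\<^sub>m nr2 0 * 0\<^sub>m 0 nc1) (B * L + 0\<^sub>m nr2 0 * 0\<^sub>m 0 nc2)"
    by (rule mult_four_block_mat) (use assms in auto)
  also have "\<dots> = four_block_mat (A * K) (A * L) (B * K) (B * L)"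
    using assms by simp
  finally show ?thesis .
qed

lemma mat_adjoint_append_rows_mult:
  assumes A: "(A :: complex mat) \<in> carrier_mat nr1 nc" and B: "B \<in> carrier_mat nr2 nc"
  shows "mat_adjoint (A @\<^sub>r B) * (A @\<^sub>r B) = mat_adjoint A * A + mat_adjoint B * B"
proof -
  have "mat_adjoint (A @\<^sub>r B) = four_block_mat (mat_adjoint A) (mat_adjoint B) (0\<^sub>m 0 nr1) (0\<^sub>m 0 nr2)"
    unfolding append_rows_def using A B by (subst mat_adjoint_four_block_mat) auto
  moreover have "A @\<^sub>r B = four_block_mat A (0\<^sub>m nr1 0) B (0\<^sub>m nr2 0)"
    unfolding append_rows_def using A B by auto
  ultimately have "mat_adjoint (A @\<^sub>r B) * (A @\<^sub>r B) = four_block_mat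
      (mat_adjoint A * A + mat_adjoint B * B) (mat_adjoint A * 0\<^sub>m nr1 0 + mat_adjoint B * 0\<^sub>m nr2 0)
      (0\<^sub>m 0 nr1 * A + 0\<^sub>m 0 nr2 * B) (0\<^sub>m 0 nr1 * 0\<^sub>m nr1 0 + 0\<^sub>m 0 nr2 * 0\<^sub>m nr2 0)"
    using A B by (simp only:) (rule mult_four_block_mat; auto)
  also have "\<dots> = mat_adjoint A * A + mat_adjoint B * B"
    using A B by (simp, intro four_block_mat_empty add_carrier_mat mult_carrier_mat) auto
  finally show ?thesis .
qed

lemma append_cols_mult_mat_adjoint:
  assumes K: "(K :: complex mat) \<in> carrier_mat nr nc1" and L: "L \<in> carrier_mat nr nc2"
  shows "append_cols K L * mat_adjoint (append_cols K L) = K * mat_adjoint K + L * mat_adjoint L"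
proof -
  have adj: "mat_adjoint (append_cols K L) = mat_adjoint K @\<^sub>r mat_adjoint L"
    unfolding append_rows_def append_cols_def using K L
    by (subst mat_adjoint_four_block_mat) auto
  then have "mat_adjoint (mat_adjoint K @\<^sub>r mat_adjoint L) = append_cols K L"
    by (metis mat_adjoint_adjoint)
  then show ?thesis
    using mat_adjoint_append_rows_mult[of "mat_adjoint K" nc1 nr "mat_adjoint L" nc2] K L
    by (simp only: adj mat_adjoint_adjoint mat_adjoint_carrier)
qed

section \<open>Isometric factorisations\<close>

lemma col_range_mult_subset:
  assumes A: "A \<in> carrier_mat nr k" and B: "B \<in> carrier_mat k nc"
  shows "col_range (A * B) \<subseteq> col_range A"
proof
  fix v assume "v \<in> col_range (A * B)"
  then obtain x where x: "x \<in> carrier_vec nc" and v: "v = A * B *\<^sub>v x"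
    unfolding col_range_def using B by auto
  have "v = A *\<^sub>v (B *\<^sub>v x)" unfolding v using A B x by simp
  moreover have "B *\<^sub>v x \<in> carrier_vec (dim_col A)" using A B x by simp
  ultimately show "v \<in> col_range A" unfolding col_range_def by blast
qed

lemma four_block_mat_zero_rows_factor:
  fixes G :: "'a :: semiring_1 mat"
  assumes G: "G \<in> carrier_mat k l" and K: "K \<in> carrier_mat l nc1" and L: "L \<in> carrier_mat l nc2"
  shows "four_block_mat (G * K) (G * L) (0\<^sub>m m nc1) (0\<^sub>m m nc2) = (1\<^sub>m k @\<^sub>r 0\<^sub>m m k) * G * append_cols K L"
proof -
  have "(1\<^sub>m k @\<^sub>r 0\<^sub>m m k) * G = G @\<^sub>r 0\<^sub>m m l"
    using append_rows_mult[of "1\<^sub>m k" k k "0\<^sub>m m k" m G l] G carrier_matD[OF G] by simp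
  then show ?thesis
    using append_rows_mult_append_cols[of G k l "0\<^sub>m m l" m K nc1 L nc2] G K L by simp
qed

lemma penrose_isometry_factor:
  assumes P: "P \<in> carrier_mat m k" and G: "G \<in> carrier_mat k l" and C: "C \<in> carrier_mat l n"
    and PP: "mat_adjoint P * P = 1\<^sub>m k" and CC: "C * mat_adjoint C = 1\<^sub>m l"
    and pen: "penrose G M"
  shows "penrose (P * G * C) (mat_adjoint C * M * mat_adjoint P)"
proof -
  from pen G have M: "M \<in> carrier_mat l k" and GMG: "G * M * G = G" and MGM: "M * G * M = M"
    and GM: "mat_adjoint (G * M) = G * M" and MG: "mat_adjoint (M * G) = M * G"
    unfolding penrose_def by auto
  note [simp] = carrier_matD[OF P] carrier_matD[OF G] carrier_matD[OF C] carrier_matD[OF M]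
  have PPX [simp]: "mat_adjoint P * (P * X) = X" if "dim_row X = k" for X
    using PP that assoc_mult_mat_dims[of "mat_adjoint P" P X] by simp
  have CCX [simp]: "C * (mat_adjoint C * X) = X" if "dim_row X = l" for X
    using CC that assoc_mult_mat_dims[of C "mat_adjoint C" X] by simp
  let ?A = "P * G * C" and ?X = "mat_adjoint C * M * mat_adjoint P"
  have AX: "?A * ?X = P * (G * M) * mat_adjoint P" by (simp add: assoc_mult_mat_dims)
  have XA: "?X * ?A = mat_adjoint C * (M * G) * C" by (simp add: assoc_mult_mat_dims)
  have "?A * ?X * ?A = P * (G * M * G) * C" by (simp add: assoc_mult_mat_dims)
  then have AXA: "?A * ?X * ?A = ?A" using GMG by (simp add: assoc_mult_mat_dims)
  have "?X * ?A * ?X = mat_adjoint C * (M * G * M) * mat_adjoint P" by (simp add: assoc_mult_mat_dims)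
  then have XAX: "?X * ?A * ?X = ?X" using MGM by (simp add: assoc_mult_mat_dims)
  have "mat_adjoint (?A * ?X) = ?A * ?X"
    unfolding AX using GM by (simp add: mat_adjoint_mult assoc_mult_mat_dims)
  moreover have "mat_adjoint (?X * ?A) = ?X * ?A"
    unfolding XA using MG by (simp add: mat_adjoint_mult assoc_mult_mat_dims)
  moreover have "?X \<in> carrier_mat (dim_col ?A) (dim_row ?A)" by (intro carrier_matI) simp_all
  ultimately show ?thesis
    unfolding penrose_def using AXA XAX by blast
qed

lemma diamond_le_isometry_factor_iff:
  assumes P: "P \<in> carrier_mat m k" and C: "C \<in> carrier_mat k n" and M: "M \<in> carrier_mat k k"
    and D: "D \<in> carrier_mat k k" and D': "D' \<in> carrier_mat k k"
    and PP: "mat_adjoint P * P = 1\<^sub>m k" and CC: "C * mat_adjoint C = 1\<^sub>m k"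
    and DD': "D * D' = 1\<^sub>m k" and D'D: "D' * D = 1\<^sub>m k"
  shows "diamond_le (mat_adjoint C * M * mat_adjoint P) (mat_adjoint C * D * mat_adjoint P) \<longleftrightarrow>
    M * mat_adjoint D * M = M * mat_adjoint M * M"
proof -
  note [simp] = carrier_matD[OF P] carrier_matD[OF C] carrier_matD[OF M] carrier_matD[OF D] carrier_matD[OF D']
  have D'D_adj: "mat_adjoint D * mat_adjoint D' = 1\<^sub>m k"
    using arg_cong[OF D'D, of mat_adjoint] by (simp add: mat_adjoint_mult)
  have cancel [simp]: "Q * (R * X) = X"
    if "Q * R = 1\<^sub>m k" "dim_col Q = dim_row R" "dim_col R = k" "dim_row X = k" for Q R X :: "complex mat"
    using that assoc_mult_mat_dims[of Q R X] by simp
  let ?X = "mat_adjoint C * M * mat_adjoint P" and ?Y = "mat_adjoint C * D * mat_adjoint P"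
  have Y: "?Y \<in> carrier_mat n m" by (intro carrier_matI) simp_all
  have XY: "?X = ?Y * (P * D' * M * mat_adjoint P)"
    using DD' PP by (simp add: assoc_mult_mat_dims)
  have range: "col_range ?X \<subseteq> col_range ?Y"
    by (subst XY) (rule col_range_mult_subset[OF Y], intro carrier_matI, simp_all)
  have adj_X: "mat_adjoint ?X = P * mat_adjoint M * C"
    by (simp add: mat_adjoint_mult assoc_mult_mat_dims)
  have adj_Y: "mat_adjoint ?Y = P * mat_adjoint D * C"
    by (simp add: mat_adjoint_mult assoc_mult_mat_dims)
  have XY_adj: "mat_adjoint ?X = mat_adjoint ?Y * (mat_adjoint C * mat_adjoint D' * mat_adjoint M * C)"
    unfolding adj_X adj_Y using CC D'D_adj by (simp add: assoc_mult_mat_dims)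
  have range_adj: "col_range (mat_adjoint ?X) \<subseteq> col_range (mat_adjoint ?Y)"
    by (subst XY_adj) (rule col_range_mult_subset[OF mat_adjoint_carrier[OF Y]], intro carrier_matI, simp_all)
  have XYX: "?X * mat_adjoint ?Y * ?X = mat_adjoint C * (M * mat_adjoint D * M) * mat_adjoint P"
    unfolding adj_Y using CC PP by (simp add: assoc_mult_mat_dims)
  have XXX: "?X * mat_adjoint ?X * ?X = mat_adjoint C * (M * mat_adjoint M * M) * mat_adjoint P"
    unfolding adj_X using CC PP by (simp add: assoc_mult_mat_dims)
  have unfactor: "C * (mat_adjoint C * R * mat_adjoint P) * P = R" if "R \<in> carrier_mat k k" for R
    using that CC PP by (simp add: assoc_mult_mat_dims)
  have "?X * mat_adjoint ?Y * ?X = ?X * mat_adjoint ?X * ?X \<longleftrightarrow>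
      M * mat_adjoint D * M = M * mat_adjoint M * M"
    unfolding XYX XXX using unfactor[of "M * mat_adjoint D * M"] unfactor[of "M * mat_adjoint M * M"]
    by (metis mult_carrier_mat mat_adjoint_carrier M D)
  then show ?thesis
    unfolding diamond_le_def using range range_adj by blast
qed

lemma mult_adjoint_triple_eq_iff:
  fixes D T :: "complex mat"
  assumes D: "D \<in> carrier_mat k k" and D': "D' \<in> carrier_mat k k" and T: "T \<in> carrier_mat k k"
    and D'D: "D' * D = 1\<^sub>m k"
  shows "(D * T) * mat_adjoint D * (D * T) = (D * T) * mat_adjoint (D * T) * (D * T) \<longleftrightarrow>
    T * (mat_adjoint T - 1\<^sub>m k) * (mat_adjoint D * D) * T = 0\<^sub>m k k"
proof -
  note [simp] = carrier_matD[OF D] carrier_matD[OF D'] carrier_matD[OF T]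
  define E1 where "E1 = T * (mat_adjoint D * D) * T"
  define E2 where "E2 = T * mat_adjoint T * (mat_adjoint D * D) * T"
  have E1: "E1 \<in> carrier_mat k k" and E2: "E2 \<in> carrier_mat k k"
    unfolding E1_def E2_def by (auto intro: carrier_matI)
  have lhs: "(D * T) * mat_adjoint D * (D * T) = D * E1"
    unfolding E1_def by (simp add: assoc_mult_mat_dims)
  have rhs: "(D * T) * mat_adjoint (D * T) * (D * T) = D * E2"
    unfolding E2_def by (simp add: mat_adjoint_mult assoc_mult_mat_dims)
  have cancel: "D' * (D * E) = E" if "E \<in> carrier_mat k k" for E
    using that D'D assoc_mult_mat_dims[of D' D E] by simp
  have "D * E1 = D * E2 \<longleftrightarrow> E1 = E2"
  proof
    assume "D * E1 = D * E2"
    then have "D' * (D * E1) = D' * (D * E2)" by simp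
    then show "E1 = E2" unfolding cancel[OF E1] cancel[OF E2] .
  qed simp
  also have "\<dots> \<longleftrightarrow> E2 - E1 = 0\<^sub>m k k"
  proof
    assume "E2 - E1 = 0\<^sub>m k k"
    then show "E1 = E2" using eq_of_minus_eq_zero_mat[OF E2 E1] by simp
  qed (use E1 in simp)
  also have "E2 - E1 = T * (mat_adjoint T - 1\<^sub>m k) * (mat_adjoint D * D) * T"
  proof -
    have T': "mat_adjoint T \<in> carrier_mat k k" using T by simp
    have DD: "mat_adjoint D * D \<in> carrier_mat k k" by (intro carrier_matI) simp_all
    have TT': "T * mat_adjoint T \<in> carrier_mat k k" by (intro carrier_matI) simp_all
    have "T * (mat_adjoint T - 1\<^sub>m k) = T * mat_adjoint T - T * 1\<^sub>m k"
      by (rule mult_minus_distrib_mat[OF T T' one_carrier_mat])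
    also have "T * 1\<^sub>m k = T" using T by simp
    finally have "T * (mat_adjoint T - 1\<^sub>m k) * (mat_adjoint D * D) * T =
        (T * mat_adjoint T - T) * (mat_adjoint D * D) * T" by (simp only:)
    also have "\<dots> = (T * mat_adjoint T * (mat_adjoint D * D) - T * (mat_adjoint D * D)) * T"
      by (simp only: minus_mult_distrib_mat[OF TT' T DD])
    also have "\<dots> = E2 - E1"
      unfolding E1_def E2_def by (intro minus_mult_distrib_mat[OF _ _ T] carrier_matI) simp_all
    finally show ?thesis by (rule sym)
  qed
  finally show ?thesis unfolding lhs rhs .
qed

lemma hartwig_spindelboeck_isometry_factor:
  assumes U: "unitary_mat U n" and rn: "r \<le> n"
    and K: "K \<in> carrier_mat r r" and L: "L \<in> carrier_mat r (n - r)"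
    and KL: "K * mat_adjoint K + L * mat_adjoint L = 1\<^sub>m r"
  obtains P C where "P \<in> carrier_mat n r" "C \<in> carrier_mat r n"
    "mat_adjoint P * P = 1\<^sub>m r" "C * mat_adjoint C = 1\<^sub>m r"
    "\<And>X. X \<in> carrier_mat r r \<Longrightarrow>
      U * four_block_mat (X * K) (X * L) (0\<^sub>m (n - r) r) (0\<^sub>m (n - r) (n - r)) * mat_adjoint U = P * X * C"
proof -
  let ?E = "1\<^sub>m r @\<^sub>r 0\<^sub>m (n - r) r" and ?F = "append_cols K L"
  have U_carrier: "U \<in> carrier_mat n n" and UU: "mat_adjoint U * U = 1\<^sub>m n"
    using U unfolding unitary_mat_def by auto
  have E: "?E \<in> carrier_mat n r"
    using carrier_append_rows[of "1\<^sub>m r" r r "0\<^sub>m (n - r) r" "n - r"] rn by simp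
  have F: "?F \<in> carrier_mat r n" using carrier_append_cols[OF K L] rn by simp
  note [simp] = carrier_matD[OF U_carrier] carrier_matD[OF E] carrier_matD[OF F]
  have "mat_adjoint (U * ?E) * (U * ?E) = mat_adjoint ?E * (mat_adjoint U * U) * ?E"
    by (simp add: mat_adjoint_mult assoc_mult_mat_dims)
  then have PP: "mat_adjoint (U * ?E) * (U * ?E) = 1\<^sub>m r"
    using UU mat_adjoint_append_rows_mult[of "1\<^sub>m r" r r "0\<^sub>m (n - r) r" "n - r"] by simp
  have "?F * mat_adjoint U * mat_adjoint (?F * mat_adjoint U) = ?F * (mat_adjoint U * U) * mat_adjoint ?F"
    by (simp add: mat_adjoint_mult assoc_mult_mat_dims)
  then have CC: "?F * mat_adjoint U * mat_adjoint (?F * mat_adjoint U) = 1\<^sub>m r"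
    using UU append_cols_mult_mat_adjoint[OF K L] KL by simp
  have factor: "U * four_block_mat (X * K) (X * L) (0\<^sub>m (n - r) r) (0\<^sub>m (n - r) (n - r)) * mat_adjoint U
      = U * ?E * X * (?F * mat_adjoint U)" if X: "X \<in> carrier_mat r r" for X
    unfolding four_block_mat_zero_rows_factor[OF X K L] using X by (simp add: assoc_mult_mat_dims)
  show ?thesis
    by (rule that[OF mult_carrier_mat[OF U_carrier E] mult_carrier_mat[OF F mat_adjoint_carrier[OF U_carrier]]
          PP CC factor])
qed

lemma diamond_le_mp_inverse_isometry_factor_iff:
  assumes P: "P \<in> carrier_mat m k" and C: "C \<in> carrier_mat k n"
    and PP: "mat_adjoint P * P = 1\<^sub>m k" and CC: "C * mat_adjoint C = 1\<^sub>m k"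
    and D: "D \<in> carrier_mat k k" and D': "D' \<in> carrier_mat k k" and T: "T \<in> carrier_mat k k"
    and DD': "D * D' = 1\<^sub>m k" and D'D: "D' * D = 1\<^sub>m k"
  shows "diamond_le (mp_inverse (P * mp_inverse (D * T) * C)) (mp_inverse (P * D' * C)) \<longleftrightarrow>
    T * (mat_adjoint T - 1\<^sub>m k) * (mat_adjoint D * D) * T = 0\<^sub>m k k"
proof -
  have DT: "D * T \<in> carrier_mat k k" using D T by simp
  have pen: "penrose (D * T) (mp_inverse (D * T))" by (rule penrose_mp_inverse[OF DT])
  then have G: "mp_inverse (D * T) \<in> carrier_mat k k"
    using D T unfolding penrose_def by simp
  have "mp_inverse (P * mp_inverse (D * T) * C) = mat_adjoint C * (D * T) * mat_adjoint P"
    using penrose_sym[OF pen] by (intro mp_inverse_eqI penrose_isometry_factor[OF P G C PP CC])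
  moreover have "penrose D' D"
    unfolding penrose_def using D D' DD' D'D by simp
  then have "mp_inverse (P * D' * C) = mat_adjoint C * D * mat_adjoint P"
    by (intro mp_inverse_eqI penrose_isometry_factor[OF P D' C PP CC])
  ultimately have "diamond_le (mp_inverse (P * mp_inverse (D * T) * C)) (mp_inverse (P * D' * C)) \<longleftrightarrow>
      diamond_le (mat_adjoint C * (D * T) * mat_adjoint P) (mat_adjoint C * D * mat_adjoint P)"
    by (simp only:)
  also have "\<dots> \<longleftrightarrow> (D * T) * mat_adjoint D * (D * T) = (D * T) * mat_adjoint (D * T) * (D * T)"
    by (rule diamond_le_isometry_factor_iff[OF P C DT D D' PP CC DD' D'D])
  also have "\<dots> \<longleftrightarrow> T * (mat_adjoint T - 1\<^sub>m k) * (mat_adjoint D * D) * T = 0\<^sub>m k k"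
    by (rule mult_adjoint_triple_eq_iff[OF D D' T D'D])
  finally show ?thesis .
qed

theorem theorem5p5:
  fixes n r :: nat and B U K L T :: "complex mat" and \<sigma> :: "nat \<Rightarrow> real"
  defines "Sig \<equiv> mat r r (\<lambda>(i,j). if i = j then complex_of_real (\<sigma> i) else 0)"
      and "SigInv \<equiv> mat r r (\<lambda>(i,j). if i = j then complex_of_real (1 / \<sigma> i) else 0)"
  assumes B: "B \<in> carrier_mat n n" and Bnz: "B \<noteq> 0\<^sub>m n n"
      and rk: "vec_space.rank n B = r"
      and U: "unitary_mat U n"
      and sig_pos: "\<forall>i<r. \<sigma> i > 0"
      and sig_sv: "\<forall>i<r. \<exists>v. v \<in> carrier_vec n \<and> v \<noteq> 0\<^sub>v n \<and>
                     (mat_adjoint B * B) *\<^sub>v v = complex_of_real ((\<sigma> i)\<^sup>2) \<cdot>\<^sub>v v"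
      and K: "K \<in> carrier_mat r r" and L: "L \<in> carrier_mat r (n - r)"
      and KL: "K * mat_adjoint K + L * mat_adjoint L = 1\<^sub>m r"
      and HS: "B = U * four_block_mat (Sig * K) (Sig * L) (0\<^sub>m (n - r) r) (0\<^sub>m (n - r) (n - r)) * mat_adjoint U"
      and T: "T \<in> carrier_mat r r" and Tidem: "T * T = T"
  shows "diamond_le
           (mp_inverse (U * four_block_mat (mp_inverse (SigInv * T) * K) (mp_inverse (SigInv * T) * L)
                (0\<^sub>m (n - r) r) (0\<^sub>m (n - r) (n - r)) * mat_adjoint U))
           (mp_inverse B)
         \<longleftrightarrow> T * (mat_adjoint T - 1\<^sub>m r) * (SigInv * SigInv) * T = 0\<^sub>m r r"
proof -
  have "r \<le> n" using vec_space.rank_le_nc B rk by metis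
  then obtain P C where P: "P \<in> carrier_mat n r" and C: "C \<in> carrier_mat r n"
    and PP: "mat_adjoint P * P = 1\<^sub>m r" and CC: "C * mat_adjoint C = 1\<^sub>m r"
    and factor: "\<And>X. X \<in> carrier_mat r r \<Longrightarrow>
      U * four_block_mat (X * K) (X * L) (0\<^sub>m (n - r) r) (0\<^sub>m (n - r) (n - r)) * mat_adjoint U = P * X * C"
    using hartwig_spindelboeck_isometry_factor[OF U _ K L KL] by blast
  have Sig: "Sig \<in> carrier_mat r r" and SigInv: "SigInv \<in> carrier_mat r r"
    unfolding Sig_def SigInv_def by auto
  have "SigInv * Sig = 1\<^sub>m r" and "Sig * SigInv = 1\<^sub>m r"
    unfolding Sig_def SigInv_def using sig_pos
    by (auto intro!: diag_mat_mult_eq_one simp flip: of_real_mult)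
  moreover have "mat_adjoint SigInv = SigInv"
    unfolding SigInv_def by (rule mat_adjoint_diag_real)
  moreover have "mp_inverse (SigInv * T) \<in> carrier_mat r r"
    using penrose_mp_inverse[of "SigInv * T" r r] SigInv T unfolding penrose_def by simp
  ultimately show ?thesis
    unfolding HS factor[OF Sig] factor[OF \<open>mp_inverse (SigInv * T) \<in> carrier_mat r r\<close>]
    using diamond_le_mp_inverse_isometry_factor_iff[OF P C PP CC SigInv Sig T] by simp
qed

end
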